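(* Let $\mathcal{P}$ be a partition of $\mathbb{R}^{2}$. Suppose there exists $D\in(0,\infty)$ that is a strict pairwise bound for every $X\in\mathcal{P}$, and let $\epsilon\in(0,\infty)$ be such that $|\mathcal{N}_{\epsilon}(\vec{p})|\leq 3$ for all $\vec{p}\in\mathbb{R}^{2}$. Then $\epsilon\leq\frac{D}{4}$.
   Context: On $\mathbb{R}^2$ use $d_{max}(\vec{x},\vec{y})=\max_i|x_i-y_i|$; $D$ is a strict pairwise bound for $X$ if $d_{max}(\vec{x},\vec{y})<D$ for all $\vec{x},\vec{y}\in X$; $\overline{B}_{\epsilon}(\vec{p})=\{\vec{x}: d_{max}(\vec{x},\vec{p})\le\epsilon\}$; $\mathcal{N}_{\epsilon}(\vec{p})=\{X\in\mathcal{P}: X\cap\overline{B}_{\epsilon}(\vec{p})\neq\emptyset\}$. *)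

theory Defs
  imports "HOL-Analysis.Analysis"
begin

type_synonym pt = "real \<times> real"

definition dmax :: "pt \<Rightarrow> pt \<Rightarrow> real" where
  "dmax x y = max \<bar>fst x - fst y\<bar> \<bar>snd x - snd y\<bar>"

definition strict_pairwise_bound :: "real \<Rightarrow> pt set \<Rightarrow> bool" where
  "strict_pairwise_bound D X \<longleftrightarrow> (\<forall>x\<in>X. \<forall>y\<in>X. dmax x y < D)"

definition closed_ball_max :: "real \<Rightarrow> pt \<Rightarrow> pt set" where
  "closed_ball_max e p = {x. dmax x p \<le> e}"

definition nbhd :: "pt set set \<Rightarrow> real \<Rightarrow> pt \<Rightarrow> pt set set" where
  "nbhd P e p = {X \<in> P. X \<inter> closed_ball_max e p \<noteq> {}}"

definition is_partition :: "pt set set \<Rightarrow> bool" where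
  "is_partition P \<longleftrightarrow> {} \<notin> P \<and> \<Union>P = UNIV \<and>
     (\<forall>X\<in>P. \<forall>Y\<in>P. X \<noteq> Y \<longrightarrow> X \<inter> Y = {})"

end

theory Submission
  imports Defs
begin

text \<open>
  Suppose \<open>\<epsilon> > D/4\<close> and put \<open>\<rho> = \<epsilon> - D/4\<close>. Labelling a fine grid on a square of side at least
  \<open>D\<close> by the cells containing the grid points, Sperner's lemma yields a point \<open>M\<close> that is
  \<open>\<rho>\<close>-close to three distinct cells. Each of the four corners \<open>M + (\<plusminus>D/2, \<plusminus>D/2)\<close> is
  \<open>D/4\<close>-close to the point \<open>M + (\<plusminus>D/4, \<plusminus>D/4)\<close>, whose \<open>\<epsilon>\<close>-neighbourhood already meets those
  three cells and hence no other; so every corner lies in one of the three cells. But two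
  corners are at distance \<open>D\<close>, so no cell contains two of them.
\<close>

definition cell :: "pt set set \<Rightarrow> pt \<Rightarrow> pt set" where
  "cell P y = (SOME X. X \<in> P \<and> y \<in> X)"

lemma
  assumes "is_partition P"
  shows cell_in_partition: "cell P y \<in> P" and mem_cell: "y \<in> cell P y"
proof -
  have "\<exists>X. X \<in> P \<and> y \<in> X" using assms unfolding is_partition_def by blast
  then have "cell P y \<in> P \<and> y \<in> cell P y" unfolding cell_def by (rule someI_ex)
  then show "cell P y \<in> P" "y \<in> cell P y" by auto
qed

lemma dmax_less_in_cell:
  assumes "is_partition P" "\<forall>X\<in>P. strict_pairwise_bound D X" "x \<in> cell P z" "y \<in> cell P z"
  shows "dmax x y < D"
  using assms cell_in_partition[OF assms(1)] unfolding strict_pairwise_bound_def by blast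

lemma dmax_triangle: "dmax x z \<le> dmax x y + dmax y z"
proof -
  have "\<bar>fst x - fst z\<bar> \<le> \<bar>fst x - fst y\<bar> + \<bar>fst y - fst z\<bar>"
    "\<bar>snd x - snd z\<bar> \<le> \<bar>snd x - snd y\<bar> + \<bar>snd y - snd z\<bar>"
    by arith+
  then show ?thesis unfolding dmax_def max_def by auto
qed

lemma dmax_add_left: "dmax (x + v) (x + w) = dmax v w"
  unfolding dmax_def by simp

definition coord :: "nat \<Rightarrow> pt \<Rightarrow> real" where
  "coord j x = (if j = 0 then fst x else snd x)"

lemma dmax_le_iff_coord: "dmax x y \<le> r \<longleftrightarrow> (\<forall>j<2. \<bar>coord j x - coord j y\<bar> \<le> r)"
proof
  assume "\<forall>j<2. \<bar>coord j x - coord j y\<bar> \<le> r"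
  from this[rule_format, of 0] this[rule_format, of 1] show "dmax x y \<le> r"
    unfolding dmax_def coord_def by simp
qed (auto simp: dmax_def coord_def)

lemma abs_coord_diff_le_dmax: "j < 2 \<Longrightarrow> \<bar>coord j x - coord j y\<bar> \<le> dmax x y"
  using dmax_le_iff_coord by blast

definition sign_vectors :: "pt set" where
  "sign_vectors = {-1, 1} \<times> {-1, 1}"

lemma card_sign_vectors: "card sign_vectors = 4"
  unfolding sign_vectors_def by simp

lemma dmax_scaleR_sign_vector:
  "v \<in> sign_vectors \<Longrightarrow> dmax (a *\<^sub>R v) (b *\<^sub>R v) = \<bar>a - b\<bar>"
  unfolding sign_vectors_def dmax_def by (auto simp: abs_minus_commute)

lemma dmax_scaleR_distinct_sign_vectors:
  "v \<in> sign_vectors \<Longrightarrow> w \<in> sign_vectors \<Longrightarrow> v \<noteq> w \<Longrightarrow>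
    dmax (a *\<^sub>R v) (a *\<^sub>R w) = 2 * \<bar>a\<bar>"
  unfolding sign_vectors_def dmax_def by (auto simp: prod_eq_iff abs_minus_commute)

lemma nbhd_mono:
  assumes "dmax p q + r \<le> e"
  shows "nbhd P r p \<subseteq> nbhd P e q"
proof -
  have "closed_ball_max r p \<subseteq> closed_ball_max e q"
    using assms unfolding closed_ball_max_def
    by (auto intro: order_trans[OF dmax_triangle[where y = p]])
  then show ?thesis unfolding nbhd_def by blast
qed

lemma kuhn_fully_labelled_simplex:
  assumes "0 < p"
    and "\<And>x j. \<forall>i. x i \<le> p \<Longrightarrow> j < n \<Longrightarrow> x j = 0 \<Longrightarrow> lab x j = 0"
    and "\<And>x j. \<forall>i. x i \<le> p \<Longrightarrow> j < n \<Longrightarrow> x j = p \<Longrightarrow> lab x j = 1"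
  obtains b :: "nat \<Rightarrow> nat" and s where "\<forall>a\<in>s. \<forall>j. b j \<le> a j \<and> a j \<le> Suc (b j)"
    and "(reduced n \<circ> lab) ` s = {..n}"
proof -
  have "odd (card {s. ksimplex p n s \<and> (reduced n \<circ> lab) ` s = {..n}})"
    using assms by (intro kuhn_combinatorial) auto
  then obtain s where "ksimplex p n s" "(reduced n \<circ> lab) ` s = {..n}"
    using odd_card_imp_not_empty by force
  moreover from this obtain b u where "kuhn_simplex p n b u s"
    by (auto elim: ksimplex.cases)
  ultimately show ?thesis
    using that[where b = b and s = s] kuhn_simplex.base_le kuhn_simplex.le_Suc_base by blast
qed

text \<open>
  Grid point \<open>x\<close> gets label \<open>1\<close> in direction \<open>j\<close> iff its cell reaches the far side
  \<open>coord j = \<rho> p \<ge> D\<close> of the square; a cell meeting the near side cannot, by the diameter bound.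
\<close>

lemma partition_three_cells_near_point:
  assumes part: "is_partition P"
    and bound: "\<forall>X\<in>P. strict_pairwise_bound D X"
    and "\<rho> > 0"
  obtains M Z where "Z \<subseteq> nbhd P \<rho> M" "card Z = 3"
proof -
  define p where "p = nat \<lceil>D / \<rho>\<rceil> + 1"
  have "0 < p" unfolding p_def by simp
  have "D / \<rho> \<le> real p" unfolding p_def by linarith
  then have side: "D \<le> \<rho> * real p" using \<open>\<rho> > 0\<close> by (simp add: field_simps)
  define g where "g x = (\<rho> * real (x 0), \<rho> * real (x 1))" for x :: "nat \<Rightarrow> nat"
  have coord_g: "coord j (g x) = \<rho> * real (x j)" if "j < 2" for j x
    using that unfolding g_def coord_def by (auto simp: less_2_cases_iff)
  define lab where
    "lab x j = (if \<exists>q\<in>cell P (g x). \<rho> * real p \<le> coord j q then 1 else 0 :: nat)" for x j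
  have lab0: "lab x j = 0" if "j < 2" "x j = 0" for x j
  proof -
    have "coord j q < \<rho> * real p" if "q \<in> cell P (g x)" for q
      using abs_coord_diff_le_dmax[OF \<open>j < 2\<close>, of q "g x"] coord_g[OF \<open>j < 2\<close>] \<open>x j = 0\<close>
        dmax_less_in_cell[OF part bound that mem_cell[OF part]] side
      by simp
    then show ?thesis unfolding lab_def by force
  qed
  have lab1: "lab x j = 1" if "j < 2" "x j = p" for x j
    using mem_cell[OF part, of "g x"] coord_g[OF that(1), of x] that(2) unfolding lab_def by force
  obtain b s where vertices: "\<forall>a\<in>s. \<forall>j. b j \<le> a j \<and> a j \<le> Suc (b j)"
    and labels: "(reduced 2 \<circ> lab) ` s = {..2}"
    by (rule kuhn_fully_labelled_simplex[OF \<open>0 < p\<close>, of 2 lab]) (simp_all add: lab0 lab1)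
  have near: "dmax (g a) (g b) \<le> \<rho>" if "a \<in> s" for a
    unfolding dmax_le_iff_coord
  proof (intro allI impI)
    fix j :: nat
    assume "j < 2"
    have "a j = b j \<or> a j = Suc (b j)" using vertices that by (meson le_SucE le_antisym)
    then have "\<bar>\<rho> * real (a j) - \<rho> * real (b j)\<bar> \<le> \<rho>" using \<open>\<rho> > 0\<close> by (auto simp: algebra_simps)
    then show "\<bar>coord j (g a) - coord j (g b)\<bar> \<le> \<rho>" by (simp only: coord_g[OF \<open>j < 2\<close>])
  qed
  have vertex_with_label: "\<exists>a\<in>s. reduced 2 (lab a) = k" if "k \<le> 2" for k
  proof -
    have "k \<in> (reduced 2 \<circ> lab) ` s" using that labels by simp
    then show ?thesis by auto
  qed
  obtain a0 a1 a2 where a: "a0 \<in> s" "a1 \<in> s" "a2 \<in> s"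
    and r: "reduced 2 (lab a0) = 0" "reduced 2 (lab a1) = 1" "reduced 2 (lab a2) = 2"
    using vertex_with_label[of 0] vertex_with_label[of 1] vertex_with_label[of 2] by auto
  have same_lab: "lab x = lab y" if "cell P (g x) = cell P (g y)" for x y
    using that unfolding lab_def by simp
  have "cell P (g a0) \<noteq> cell P (g a1)" "cell P (g a0) \<noteq> cell P (g a2)"
    "cell P (g a1) \<noteq> cell P (g a2)"
    using r by (auto dest: same_lab)
  moreover have "cell P (g a) \<in> nbhd P \<rho> (g b)" if "a \<in> s" for a
    using near[OF that] cell_in_partition[OF part] mem_cell[OF part]
    unfolding nbhd_def closed_ball_max_def by blast
  ultimately show ?thesis
    using a by (intro that[of "{cell P (g a0), cell P (g a1), cell P (g a2)}" "g b"]) auto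
qed

lemma cell_mem_three_near_cells:
  assumes part: "is_partition P"
    and "finite (nbhd P e q)" "card (nbhd P e q) \<le> 3"
    and "Z \<subseteq> nbhd P r p" "card Z = 3"
    and "dmax p q + r \<le> e" "dmax x q \<le> e"
  shows "cell P x \<in> Z"
proof -
  have "Z \<subseteq> nbhd P e q" using assms(4) nbhd_mono[OF assms(6)] by blast
  then have "Z = nbhd P e q" using assms(2,3,5) by (metis card_subset_eq order_antisym card_mono)
  then show ?thesis
    using assms(7) cell_in_partition[OF part] mem_cell[OF part]
    unfolding nbhd_def closed_ball_max_def by blast
qed

lemma inj_on_corner_cells:
  assumes "is_partition P" "\<forall>X\<in>P. strict_pairwise_bound D X" "D > 0"
  shows "inj_on (\<lambda>v. cell P (M + (D / 2) *\<^sub>R v)) sign_vectors"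
proof (rule inj_onI, rule ccontr)
  fix v w
  assume v: "v \<in> sign_vectors" and w: "w \<in> sign_vectors" and "v \<noteq> w"
    and "cell P (M + (D / 2) *\<^sub>R v) = cell P (M + (D / 2) *\<^sub>R w)"
  then have "dmax (M + (D / 2) *\<^sub>R v) (M + (D / 2) *\<^sub>R w) < D"
    using dmax_less_in_cell[OF assms(1,2)] mem_cell[OF assms(1)] by metis
  moreover have "dmax (M + (D / 2) *\<^sub>R v) (M + (D / 2) *\<^sub>R w) = D"
    using dmax_scaleR_distinct_sign_vectors[OF v w \<open>v \<noteq> w\<close>] \<open>D > 0\<close>
    unfolding dmax_add_left by simp
  ultimately show False by simp
qed

theorem mainTheorem9:
  fixes P :: "pt set set" and D \<epsilon> :: real
  assumes "is_partition P"
    and "D > 0"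
    and "\<forall>X\<in>P. strict_pairwise_bound D X"
    and "\<epsilon> > 0"
    and "\<forall>p. finite (nbhd P \<epsilon> p) \<and> card (nbhd P \<epsilon> p) \<le> 3"
  shows "\<epsilon> \<le> D / 4"
proof (rule ccontr)
  assume "\<not> \<epsilon> \<le> D / 4"
  then obtain M Z where Z: "Z \<subseteq> nbhd P (\<epsilon> - D / 4) M" "card Z = 3"
    using partition_three_cells_near_point[OF assms(1,3)] by (metis diff_gt_0_iff_gt not_le)
  have corner_cells: "cell P (M + (D / 2) *\<^sub>R v) \<in> Z" if v: "v \<in> sign_vectors" for v
  proof (rule cell_mem_three_near_cells[OF assms(1) _ _ Z])
    show "dmax M (M + (D / 4) *\<^sub>R v) + (\<epsilon> - D / 4) \<le> \<epsilon>"
      using dmax_add_left[of M 0] dmax_scaleR_sign_vector[OF v, of 0] \<open>D > 0\<close> by simp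
    show "dmax (M + (D / 2) *\<^sub>R v) (M + (D / 4) *\<^sub>R v) \<le> \<epsilon>"
      using dmax_scaleR_sign_vector[OF v] \<open>D > 0\<close> \<open>\<not> \<epsilon> \<le> D / 4\<close>
      unfolding dmax_add_left by simp
  qed (use assms(5) in blast)+
  then have "(\<lambda>v. cell P (M + (D / 2) *\<^sub>R v)) ` sign_vectors \<subseteq> Z" by blast
  moreover have "finite Z" using Z(2) by (simp add: card_ge_0_finite)
  ultimately have "card sign_vectors \<le> card Z"
    using inj_on_corner_cells[OF assms(1,3,2), of M] by (intro card_inj_on_le)
  then show False using Z(2) card_sign_vectors by simp
qed

end
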